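(* Let $\mathcal{K}$ be a connected simplicial complex, $(Z,d_Z)$ a metric space and $F:\mathrm{vert}(\mathcal{K})\to Z$ a function. Then the $F$-induced distance $d_F$ is a path-dominated distance function.
   Context: The $F$-induced distance is $d_F(x,y)=\min_{\pi}\max_{u\in\pi}d_Z(F(x),F(u))$, the minimum over all paths $\pi$ in the $1$-skeleton of $\mathcal{K}$ from $x$ to $y$. A function $d:\mathrm{vert}(\mathcal{K})\times\mathrm{vert}(\mathcal{K})\to\mathbb{R}_{\ge0}$ is path-dominated if (i) $d(x,y)\ge0$ and $d(x,x)=0$ for all vertices, and (ii) for any vertices $x,y$ there is a path $\pi^*$ from $x$ to $y$ in the $1$-skeleton with $d(x,y)=\max_{u\in\mathrm{vert}(\pi^* )}d(x,u)$. *)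

theory Defs
  imports "HOL-Analysis.Analysis"
begin

definition simplicial_complex :: "'a set set \<Rightarrow> bool" where
  "simplicial_complex K \<longleftrightarrow>
     (\<forall>\<sigma>\<in>K. finite \<sigma> \<and> \<sigma> \<noteq> {}) \<and>
     (\<forall>\<sigma>\<in>K. \<forall>\<tau>. \<tau> \<subseteq> \<sigma> \<and> \<tau> \<noteq> {} \<longrightarrow> \<tau> \<in> K)"

definition vert :: "'a set set \<Rightarrow> 'a set" where
  "vert K = \<Union>K"

definition skel_edge :: "'a set set \<Rightarrow> 'a \<Rightarrow> 'a \<Rightarrow> bool" where
  "skel_edge K u v \<longleftrightarrow> u \<noteq> v \<and> {u, v} \<in> K"

definition skel_path :: "'a set set \<Rightarrow> 'a list \<Rightarrow> 'a \<Rightarrow> 'a \<Rightarrow> bool" where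
  "skel_path K \<pi> x y \<longleftrightarrow>
     \<pi> \<noteq> [] \<and> hd \<pi> = x \<and> last \<pi> = y \<and> set \<pi> \<subseteq> vert K \<and>
     (\<forall>i. Suc i < length \<pi> \<longrightarrow> skel_edge K (\<pi> ! i) (\<pi> ! Suc i))"

definition connected_complex :: "'a set set \<Rightarrow> bool" where
  "connected_complex K \<longleftrightarrow> (\<forall>x\<in>vert K. \<forall>y\<in>vert K. \<exists>\<pi>. skel_path K \<pi> x y)"

definition induced_dist :: "'a set set \<Rightarrow> ('a \<Rightarrow> 'b::metric_space) \<Rightarrow> 'a \<Rightarrow> 'a \<Rightarrow> real" where
  "induced_dist K F x y =
     Min {Max ((\<lambda>u. dist (F x) (F u)) ` set \<pi>) | \<pi>. skel_path K \<pi> x y}"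

definition path_dominated :: "'a set set \<Rightarrow> ('a \<Rightarrow> 'a \<Rightarrow> real) \<Rightarrow> bool" where
  "path_dominated K d \<longleftrightarrow>
     (\<forall>x\<in>vert K. \<forall>y\<in>vert K. d x y \<ge> 0) \<and> (\<forall>x\<in>vert K. d x x = 0) \<and>
     (\<forall>x\<in>vert K. \<forall>y\<in>vert K. \<exists>\<pi>. skel_path K \<pi> x y \<and>
        d x y = Max ((\<lambda>u. d x u) ` set \<pi>))"

end

theory Submission
  imports Defs
begin

(* Since only finitely many vertex sets occur, d_F(x, y) is attained by some path pi.
   Every vertex u of pi is reached from x by a prefix of pi, so d_F(x, u) <= d_F(x, y),
   with equality at u = y: d_F(x, y) is the maximum of d_F(x, -) along pi. *)

lemma finite_vert:
  assumes "simplicial_complex K" and "finite K"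
  shows "finite (vert K)"
  using assms unfolding vert_def simplicial_complex_def by auto

lemma skel_path_singleton: "x \<in> vert K \<Longrightarrow> skel_path K [x] x x"
  unfolding skel_path_def by auto

lemma skel_path_prefix:
  assumes "skel_path K \<pi> x y" and "u \<in> set \<pi>"
  obtains \<pi>' where "skel_path K \<pi>' x u" and "set \<pi>' \<subseteq> set \<pi>"
proof -
  obtain i where i: "i < length \<pi>" "\<pi> ! i = u"
    using assms(2) by (meson in_set_conv_nth)
  have "skel_path K (take (Suc i) \<pi>) x u"
    using assms(1) i set_take_subset[of "Suc i" \<pi>]
    by (auto simp: skel_path_def hd_take last_conv_nth)
  then show thesis by (rule that) (rule set_take_subset)
qed

lemma finite_path_maxima:
  assumes "finite (vert K)"
  shows "finite {Max (g ` set \<pi>) | \<pi>. skel_path K \<pi> x y}"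
proof (rule finite_subset)
  show "{Max (g ` set \<pi>) | \<pi>. skel_path K \<pi> x y} \<subseteq> (\<lambda>S. Max (g ` S)) ` Pow (vert K)"
    unfolding skel_path_def by auto
  show "finite ((\<lambda>S. Max (g ` S)) ` Pow (vert K))"
    using assms by simp
qed

lemma induced_dist_le_path_max:
  assumes "finite (vert K)" and "skel_path K \<pi> x y"
  shows "induced_dist K F x y \<le> Max ((\<lambda>u. dist (F x) (F u)) ` set \<pi>)"
  unfolding induced_dist_def using assms by (intro Min_le finite_path_maxima) blast+

lemma induced_dist_attained:
  assumes "finite (vert K)" and "connected_complex K" and "x \<in> vert K" and "y \<in> vert K"
  obtains \<pi> where "skel_path K \<pi> x y"
    and "induced_dist K F x y = Max ((\<lambda>u. dist (F x) (F u)) ` set \<pi>)"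
proof -
  have "{Max ((\<lambda>u. dist (F x) (F u)) ` set \<pi>) | \<pi>. skel_path K \<pi> x y} \<noteq> {}"
    using assms(2-4) unfolding connected_complex_def by blast
  then have "induced_dist K F x y
      \<in> {Max ((\<lambda>u. dist (F x) (F u)) ` set \<pi>) | \<pi>. skel_path K \<pi> x y}"
    unfolding induced_dist_def using assms(1) by (intro Min_in finite_path_maxima)
  then show thesis using that by blast
qed

lemma dist_le_induced_dist:
  assumes "finite (vert K)" and "connected_complex K" and "x \<in> vert K" and "y \<in> vert K"
  shows "dist (F x) (F y) \<le> induced_dist K F x y"
proof -
  obtain \<pi> where \<pi>: "skel_path K \<pi> x y"
    and d: "induced_dist K F x y = Max ((\<lambda>u. dist (F x) (F u)) ` set \<pi>)"
    using induced_dist_attained[OF assms] .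
  have "y \<in> set \<pi>" using \<pi> unfolding skel_path_def by auto
  then show ?thesis unfolding d by (simp add: Max_ge_iff)
qed

lemma induced_dist_nonneg:
  assumes "finite (vert K)" and "connected_complex K" and "x \<in> vert K" and "y \<in> vert K"
  shows "0 \<le> induced_dist K F x y"
  using dist_le_induced_dist[OF assms] zero_le_dist order_trans by blast

lemma induced_dist_self:
  assumes "finite (vert K)" and "connected_complex K" and "x \<in> vert K"
  shows "induced_dist K F x x = 0"
proof -
  have "induced_dist K F x x \<le> Max ((\<lambda>u. dist (F x) (F u)) ` set [x])"
    using induced_dist_le_path_max[OF assms(1) skel_path_singleton[OF assms(3)]] .
  then show ?thesis
    using induced_dist_nonneg[OF assms(1-3) assms(3), of F] by simp
qed

lemma induced_dist_path_dominated:
  assumes "finite (vert K)" and "connected_complex K" and "x \<in> vert K" and "y \<in> vert K"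
  obtains \<pi> where "skel_path K \<pi> x y"
    and "induced_dist K F x y = Max ((\<lambda>u. induced_dist K F x u) ` set \<pi>)"
proof -
  obtain \<pi> where \<pi>: "skel_path K \<pi> x y"
    and d: "induced_dist K F x y = Max ((\<lambda>u. dist (F x) (F u)) ` set \<pi>)"
    using induced_dist_attained[OF assms] .
  have on_path: "induced_dist K F x u \<le> induced_dist K F x y" if u: "u \<in> set \<pi>" for u
  proof -
    obtain \<pi>' where \<pi>': "skel_path K \<pi>' x u" and sub: "set \<pi>' \<subseteq> set \<pi>"
      using skel_path_prefix[OF \<pi> u] .
    have "induced_dist K F x u \<le> Max ((\<lambda>u. dist (F x) (F u)) ` set \<pi>')"
      using induced_dist_le_path_max[OF assms(1) \<pi>'] .
    also have "\<dots> \<le> Max ((\<lambda>u. dist (F x) (F u)) ` set \<pi>)"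
      using \<pi> \<pi>' sub unfolding skel_path_def by (intro Max_mono) auto
    finally show ?thesis unfolding d .
  qed
  have "y \<in> set \<pi>" and "set \<pi> \<noteq> {}"
    using \<pi> unfolding skel_path_def by auto
  then have "induced_dist K F x y = Max ((\<lambda>u. induced_dist K F x u) ` set \<pi>)"
    using on_path by (intro antisym) (simp_all add: Max_le_iff Max_ge_iff)
  with \<pi> show thesis by (rule that)
qed

theorem claim3:
  fixes K :: "'a set set" and F :: "'a \<Rightarrow> 'b::metric_space"
  assumes "simplicial_complex K" and "finite K" and "connected_complex K"
  shows "path_dominated K (induced_dist K F)"
proof -
  have fin: "finite (vert K)" using finite_vert[OF assms(1,2)] .
  have "\<exists>\<pi>. skel_path K \<pi> x y \<and>
      induced_dist K F x y = Max ((\<lambda>u. induced_dist K F x u) ` set \<pi>)"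
    if "x \<in> vert K" and "y \<in> vert K" for x y
    using induced_dist_path_dominated[OF fin assms(3) that] by blast
  then show ?thesis
    unfolding path_dominated_def
    using induced_dist_nonneg[OF fin assms(3)] induced_dist_self[OF fin assms(3)] by blast
qed

end
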